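(* Let $b\in\mathbb{R}$ and let $(r,W,V,N,\delta)$ be a smooth solution, defined on an interval $(-\infty,\rho_* )$ with $r>0$ and $N>0$ there, of the system \[ \dot r = rN,\quad \dot W = V,\quad \dot V = (2N-\kappa)V - W(1-W^2),\quad \dot N = (\kappa-N)N - \frac{2V^2}{r^2},\quad \big(e^{-\delta}N\big)^{\cdot} = (\kappa-N)e^{-\delta}N, \] where $\dot{}=d/d\rho$ and \[ \kappa=\frac{1}{2N}\left(1+N^2+\frac{2V^2}{r^2}-\frac{(1-W^2)^2}{r^2}\right), \] which is regular at the origin with parameter $b$, i.e. as $\rho\to-\infty$, \[ r\sim e^{\rho},\quad W\sim -1+be^{2\rho},\quad V\sim 2be^{2\rho},\quad N\sim 1-2b^2e^{2\rho},\quad \delta\sim -4b^2e^{2\rho}, \] (these being the leading terms of the asymptotic expansion of the unique local solution determined by $b$, which correspond to $W=-1+br^2+O(r^4)$, $A=N^2=1-4b^2r^2+O(r^4)$, $\delta=-4b^2r^2+O(r^4)$ in the areal radius $r$). Then for all $\rho\in(-\infty,\rho_* )$, \[ 1\le \kappa(\rho)\le 2-N(\rho). \]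
   Context: This system is the static spherically symmetric Einstein–Yang–Mills system with gauge group $SU(2)$, for the metric $ds^2=-e^{-2\delta}N^2dt^2+r^2(d\rho^2+d\Omega^2)$ (with $d\Omega^2$ the round metric on the unit 2-sphere) and Yang–Mills potential $W$; the radial coordinate $\rho$ is related to the areal radius $r$ by $dr=rN\,d\rho$, and $N=\sqrt{A}$ where $A$ is the metric function in $ds^2=-e^{-2\delta}A\,dt^2+dr^2/A+r^2d\Omega^2$. *)

theory Defs
  imports "HOL-Analysis.Analysis" "HOL-Library.Landau_Symbols"
begin

definition eym_kappa :: "real \<Rightarrow> real \<Rightarrow> real \<Rightarrow> real \<Rightarrow> real" where
  "eym_kappa r W V N =
     (1 / (2 * N)) * (1 + N\<^sup>2 + 2 * V\<^sup>2 / r\<^sup>2 - (1 - W\<^sup>2)\<^sup>2 / r\<^sup>2)"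

end

theory Submission
  imports Defs "HOL-Real_Asymp.Real_Asymp"
begin

(*
  Along a solution, \<kappa>' = 1 - \<kappa>\<^sup>2 + 2 V\<^sup>2/r\<^sup>2 and (\<kappa> + N)' = 1 - \<kappa>\<^sup>2 + \<kappa> N - N\<^sup>2, and
  regularity at the origin forces \<kappa> \<rightarrow> 1 and N \<rightarrow> 1 as \<rho> \<rightarrow> -\<infinity>, since 1 + W, V and N - 1
  are O(e\<^sup>2\<^sup>\<rho>) while r ~ e\<^sup>\<rho>. Both inequalities then follow from a barrier argument
  started at -\<infinity>: \<kappa> increases wherever 0 < \<kappa> < 1, so it can never fall below 1; and since
  4 (1 - \<kappa>\<^sup>2 + \<kappa> N - N\<^sup>2) = 4 - (\<kappa> + N)\<^sup>2 - 3 (\<kappa> - N)\<^sup>2, the sum \<kappa> + N decreases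
  wherever it exceeds 2, so it never rises above 2.
*)

lemma bigo_of_smallo_diff:
  fixes f g :: "'a \<Rightarrow> real"
  assumes "(\<lambda>x. f x - c * g x) \<in> o[F](g)"
  shows "f \<in> O[F](g)"
proof -
  have "(\<lambda>x. (f x - c * g x) + c * g x) \<in> O[F](g)"
    by (rule sum_in_bigo(1)[OF landau_o.small_imp_big[OF assms]]) simp
  then show ?thesis by simp
qed

lemma last_crossing_has_nonpos_deriv:
  fixes f f' :: "real \<Rightarrow> real"
  assumes "a \<le> b"
    and deriv: "\<And>x. x \<in> {a..b} \<Longrightarrow> (f has_real_derivative f' x) (at x)"
    and "c \<le> f a" and "f b < c"
  shows "\<exists>x\<in>{a..<b}. f x = c \<and> f' x \<le> 0"
proof -
  have cont: "continuous_on {a..b} f"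
    using deriv by (meson continuous_at_imp_continuous_on DERIV_isCont)
  define Z where "Z = {x \<in> {a..b}. f x = c}"
  have "closed Z"
    unfolding Z_def by (rule continuous_closed_preimage_constant[OF cont]) simp
  moreover have "Z \<noteq> {}"
    using IVT2'[of f b c a] assms cont by (force simp: Z_def)
  moreover have bdd: "bdd_above Z"
    unfolding Z_def by (auto intro: bdd_aboveI[of _ b])
  ultimately have "Sup Z \<in> Z"
    by (rule closed_contains_Sup[rotated 2])
  then have x0: "a \<le> Sup Z" "Sup Z < b" "f (Sup Z) = c"
    using \<open>f b < c\<close> by (auto simp: Z_def less_le)
  have "\<not> 0 < f' (Sup Z)"
  proof
    assume "0 < f' (Sup Z)"
    moreover have "(f has_real_derivative f' (Sup Z)) (at (Sup Z))"
      using deriv x0 by simp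
    ultimately obtain e where "e > 0" and e: "\<And>h. 0 < h \<Longrightarrow> h < e \<Longrightarrow> f (Sup Z) < f (Sup Z + h)"
      using DERIV_pos_inc_right by blast
    define h where "h = min (e / 2) ((b - Sup Z) / 2)"
    have "0 < h" "h < e" "h < b - Sup Z"
      using \<open>e > 0\<close> x0(2) by (simp_all add: h_def min_less_iff_disj)
    define y where "y = Sup Z + h"
    have "Sup Z < y" "y \<le> b" "c < f y"
      using e[OF \<open>0 < h\<close> \<open>h < e\<close>] \<open>0 < h\<close> \<open>h < b - Sup Z\<close> x0(3) by (simp_all add: y_def)
    moreover have "continuous_on {y..b} f"
      using cont x0 \<open>Sup Z < y\<close> by (auto intro: continuous_on_subset)
    ultimately obtain z where "y \<le> z" "z \<le> b" "f z = c"
      using IVT2'[of f b c y] \<open>f b < c\<close> by force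
    then have "z \<in> Z"
      using x0 \<open>Sup Z < y\<close> by (auto simp: Z_def)
    then have "z \<le> Sup Z"
      using bdd by (rule cSup_upper)
    with \<open>Sup Z < y\<close> \<open>y \<le> z\<close> show False by simp
  qed
  with x0 show ?thesis by force
qed

lemma barrier_from_at_bot:
  fixes f f' :: "real \<Rightarrow> real"
  assumes deriv: "\<And>x. x \<le> x0 \<Longrightarrow> (f has_real_derivative f' x) (at x)"
    and lim: "(f \<longlongrightarrow> L) at_bot" and "m \<le> L" and "a < m"
    and increasing: "\<And>x. x \<le> x0 \<Longrightarrow> a < f x \<Longrightarrow> f x < m \<Longrightarrow> 0 < f' x"
  shows "m \<le> f x0"
proof (rule ccontr)
  assume "\<not> m \<le> f x0"
  define c where "c = (max (f x0) a + m) / 2"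
  have c: "a < c" "f x0 < c" "c < m"
    using \<open>\<not> m \<le> f x0\<close> \<open>a < m\<close> by (auto simp: c_def)
  have "\<forall>\<^sub>F x in at_bot. c < f x"
    using order_tendstoD(1)[OF lim] c \<open>m \<le> L\<close> by simp
  then obtain T where T: "\<And>x. x \<le> T \<Longrightarrow> c < f x"
    by (auto simp: eventually_at_bot_linorder)
  define x1 where "x1 = min T (x0 - 1)"
  have "\<exists>x\<in>{x1..<x0}. f x = c \<and> f' x \<le> 0"
    by (rule last_crossing_has_nonpos_deriv) (use deriv T c in \<open>auto simp: x1_def less_imp_le\<close>)
  then obtain x where "x < x0" "f x = c" "f' x \<le> 0"
    by auto
  with increasing[of x] c show False
    by fastforce
qed

lemma regular_origin_limits:
  fixes b :: real and r W V N :: "real \<Rightarrow> real"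
  assumes reg_r: "r \<sim>[at_bot] (\<lambda>\<rho>. exp \<rho>)"
    and reg_W: "(\<lambda>\<rho>. W \<rho> - (- 1 + b * exp (2 * \<rho>))) \<in> o[at_bot](\<lambda>\<rho>. exp (2 * \<rho>))"
    and reg_V: "(\<lambda>\<rho>. V \<rho> - 2 * b * exp (2 * \<rho>)) \<in> o[at_bot](\<lambda>\<rho>. exp (2 * \<rho>))"
    and reg_N: "(\<lambda>\<rho>. N \<rho> - (1 - 2 * b\<^sup>2 * exp (2 * \<rho>))) \<in> o[at_bot](\<lambda>\<rho>. exp (2 * \<rho>))"
  shows "(N \<longlongrightarrow> 1) at_bot"
    and "((\<lambda>\<rho>. eym_kappa (r \<rho>) (W \<rho>) (V \<rho>) (N \<rho>)) \<longlongrightarrow> 1) at_bot"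
proof -
  let ?E = "\<lambda>\<rho>::real. exp (2 * \<rho>)"
  have E_small_1: "?E \<in> o[at_bot](\<lambda>_. 1)" by real_asymp
  have "?E \<in> o[at_bot](\<lambda>\<rho>. exp \<rho>)" by real_asymp
  also have "(\<lambda>\<rho>. exp \<rho>) \<in> \<Theta>[at_bot](r)"
    using reg_r by (simp add: asymp_equiv_imp_bigtheta asymp_equiv_sym)
  finally have E_small_r: "?E \<in> o[at_bot](r)" .
  have W_bigo: "(\<lambda>\<rho>. 1 + W \<rho>) \<in> O[at_bot](?E)"
    by (rule bigo_of_smallo_diff[of _ b]) (use reg_W in \<open>simp add: algebra_simps\<close>)
  have V_bigo: "V \<in> O[at_bot](?E)"
    by (rule bigo_of_smallo_diff[of _ "2 * b"]) (use reg_V in \<open>simp add: algebra_simps\<close>)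
  have N_bigo: "(\<lambda>\<rho>. N \<rho> - 1) \<in> O[at_bot](?E)"
    by (rule bigo_of_smallo_diff[of _ "- 2 * b\<^sup>2"]) (use reg_N in \<open>simp add: algebra_simps\<close>)
  have "((\<lambda>\<rho>. N \<rho> - 1) \<longlongrightarrow> 0) at_bot"
    using smalloD_tendsto[OF landau_o.big_small_trans[OF N_bigo E_small_1]] by simp
  then show N_lim: "(N \<longlongrightarrow> 1) at_bot"
    by (simp add: LIM_zero_iff)
  have V_r: "((\<lambda>\<rho>. V \<rho> / r \<rho>) \<longlongrightarrow> 0) at_bot"
    by (rule smalloD_tendsto[OF landau_o.big_small_trans[OF V_bigo E_small_r]])
  have "((\<lambda>\<rho>. 1 + W \<rho>) \<longlongrightarrow> 0) at_bot"
    using smalloD_tendsto[OF landau_o.big_small_trans[OF W_bigo E_small_1]] by simp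
  moreover have "((\<lambda>\<rho>. (1 + W \<rho>) / r \<rho>) \<longlongrightarrow> 0) at_bot"
    by (rule smalloD_tendsto[OF landau_o.big_small_trans[OF W_bigo E_small_r]])
  ultimately have "((\<lambda>\<rho>. (2 - (1 + W \<rho>)) * ((1 + W \<rho>) / r \<rho>)) \<longlongrightarrow> (2 - 0) * 0) at_bot"
    by (intro tendsto_intros)
  then have U_r: "((\<lambda>\<rho>. (1 - (W \<rho>)\<^sup>2) / r \<rho>) \<longlongrightarrow> 0) at_bot"
    by (simp add: algebra_simps power2_eq_square)
  have "((\<lambda>\<rho>. 1 / (2 * N \<rho>) * (1 + (N \<rho>)\<^sup>2 + 2 * (V \<rho> / r \<rho>)\<^sup>2 - ((1 - (W \<rho>)\<^sup>2) / r \<rho>)\<^sup>2))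
      \<longlongrightarrow> 1 / (2 * 1) * (1 + 1\<^sup>2 + 2 * 0\<^sup>2 - 0\<^sup>2)) at_bot"
    by (intro tendsto_intros N_lim V_r U_r) simp
  then show "((\<lambda>\<rho>. eym_kappa (r \<rho>) (W \<rho>) (V \<rho>) (N \<rho>)) \<longlongrightarrow> 1) at_bot"
    by (simp add: eym_kappa_def power_divide)
qed

lemma eym_kappa_has_real_derivative:
  fixes r W V N :: "real \<Rightarrow> real" and x :: real
  defines "k \<equiv> eym_kappa (r x) (W x) (V x) (N x)"
  assumes "r x > 0" and "N x > 0"
    and "(r has_real_derivative (r x * N x)) (at x)"
    and "(W has_real_derivative (V x)) (at x)"
    and "(V has_real_derivative ((2 * N x - k) * V x - W x * (1 - (W x)\<^sup>2))) (at x)"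
    and "(N has_real_derivative ((k - N x) * N x - 2 * (V x)\<^sup>2 / (r x)\<^sup>2)) (at x)"
  shows "((\<lambda>y. eym_kappa (r y) (W y) (V y) (N y)) has_real_derivative
            (1 - k\<^sup>2 + 2 * (V x)\<^sup>2 / (r x)\<^sup>2)) (at x)"
proof -
  \<comment> \<open>\<open>\<kappa> = P / (2 N)\<close>; eliminating \<open>(1 - W\<^sup>2)\<^sup>2 / r\<^sup>2\<close> from \<open>P'\<close> via \<open>P = 2 N \<kappa>\<close> leaves only \<open>\<kappa>\<close>, \<open>N\<close>, \<open>V / r\<close>.\<close>
  define P where "P y = 1 + (N y)\<^sup>2 + 2 * (V y)\<^sup>2 / (r y)\<^sup>2 - (1 - (W y)\<^sup>2)\<^sup>2 / (r y)\<^sup>2" for y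
  have P_k: "P x = 2 * N x * k"
    using \<open>N x > 0\<close> by (simp add: k_def P_def eym_kappa_def)
  have "(P has_real_derivative 2 * (k - N x) * (N x)\<^sup>2 - 4 * k * (V x)\<^sup>2 / (r x)\<^sup>2
      + 2 * N x * ((1 - (W x)\<^sup>2)\<^sup>2 / (r x)\<^sup>2)) (at x)"
    unfolding P_def using \<open>r x > 0\<close> \<open>N x > 0\<close>
    by (auto intro!: derivative_eq_intros assms(4-)) (simp add: field_simps power2_eq_square, algebra)
  moreover have "(1 - (W x)\<^sup>2)\<^sup>2 / (r x)\<^sup>2 = 1 + (N x)\<^sup>2 + 2 * (V x)\<^sup>2 / (r x)\<^sup>2 - 2 * N x * k"
    using P_k by (simp add: P_def)
  ultimately have dP: "(P has_real_derivative 2 * (k - N x) * (N x)\<^sup>2 - 4 * k * (V x)\<^sup>2 / (r x)\<^sup>2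
      + 2 * N x * (1 + (N x)\<^sup>2 + 2 * (V x)\<^sup>2 / (r x)\<^sup>2 - 2 * N x * k)) (at x)"
    by simp
  have "(\<lambda>y. eym_kappa (r y) (W y) (V y) (N y)) = (\<lambda>y. P y / (2 * N y))"
    by (simp add: P_def eym_kappa_def)
  then show ?thesis
    using \<open>N x > 0\<close>
    by (auto intro!: derivative_eq_intros dP assms(7) simp: P_k field_simps power2_eq_square)
qed

lemma quadratic_form_gt_1_of_sum_gt_2:
  fixes k n :: real
  assumes "2 < k + n"
  shows "1 < k\<^sup>2 - k * n + n\<^sup>2"
proof -
  have "4 < (k + n)\<^sup>2"
    using assms power_strict_mono[of 2 "k + n" 2] by simp
  moreover have "4 * (k\<^sup>2 - k * n + n\<^sup>2) = (k + n)\<^sup>2 + 3 * (k - n)\<^sup>2"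
    by (simp add: algebra_simps power2_eq_square)
  ultimately show ?thesis
    by (smt (verit) zero_le_power2)
qed

theorem lemma1:
  fixes b :: real and \<rho>s :: ereal
    and r W V N \<delta> :: "real \<Rightarrow> real"
  assumes pos: "\<And>\<rho>. ereal \<rho> < \<rho>s \<Longrightarrow> r \<rho> > 0 \<and> N \<rho> > 0"
    and dr: "\<And>\<rho>. ereal \<rho> < \<rho>s \<Longrightarrow> (r has_real_derivative (r \<rho> * N \<rho>)) (at \<rho>)"
    and dW: "\<And>\<rho>. ereal \<rho> < \<rho>s \<Longrightarrow> (W has_real_derivative (V \<rho>)) (at \<rho>)"
    and dV: "\<And>\<rho>. ereal \<rho> < \<rho>s \<Longrightarrow> (V has_real_derivative
               ((2 * N \<rho> - eym_kappa (r \<rho>) (W \<rho>) (V \<rho>) (N \<rho>)) * V \<rho>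
                 - W \<rho> * (1 - (W \<rho>)\<^sup>2))) (at \<rho>)"
    and dN: "\<And>\<rho>. ereal \<rho> < \<rho>s \<Longrightarrow> (N has_real_derivative
               ((eym_kappa (r \<rho>) (W \<rho>) (V \<rho>) (N \<rho>) - N \<rho>) * N \<rho>
                 - 2 * (V \<rho>)\<^sup>2 / (r \<rho>)\<^sup>2)) (at \<rho>)"
    and d\<delta>: "\<And>\<rho>. ereal \<rho> < \<rho>s \<Longrightarrow> ((\<lambda>s. exp (- \<delta> s) * N s) has_real_derivative
               ((eym_kappa (r \<rho>) (W \<rho>) (V \<rho>) (N \<rho>) - N \<rho>) * (exp (- \<delta> \<rho>) * N \<rho>))) (at \<rho>)"
    and reg_r: "r \<sim>[at_bot] (\<lambda>\<rho>. exp \<rho>)"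
    and reg_W: "(\<lambda>\<rho>. W \<rho> - (- 1 + b * exp (2 * \<rho>))) \<in> o[at_bot](\<lambda>\<rho>. exp (2 * \<rho>))"
    and reg_V: "(\<lambda>\<rho>. V \<rho> - 2 * b * exp (2 * \<rho>)) \<in> o[at_bot](\<lambda>\<rho>. exp (2 * \<rho>))"
    and reg_N: "(\<lambda>\<rho>. N \<rho> - (1 - 2 * b\<^sup>2 * exp (2 * \<rho>))) \<in> o[at_bot](\<lambda>\<rho>. exp (2 * \<rho>))"
    and reg_\<delta>: "(\<lambda>\<rho>. \<delta> \<rho> - (- 4 * b\<^sup>2 * exp (2 * \<rho>))) \<in> o[at_bot](\<lambda>\<rho>. exp (2 * \<rho>))"
  shows "\<forall>\<rho>. ereal \<rho> < \<rho>s \<longrightarrow>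
           1 \<le> eym_kappa (r \<rho>) (W \<rho>) (V \<rho>) (N \<rho>) \<and>
           eym_kappa (r \<rho>) (W \<rho>) (V \<rho>) (N \<rho>) \<le> 2 - N \<rho>"
proof (intro allI impI)
  fix \<rho>0 assume "ereal \<rho>0 < \<rho>s"
  then have inside: "ereal \<rho> < \<rho>s" if "\<rho> \<le> \<rho>0" for \<rho>
    using that by (meson ereal_less_eq(3) order_le_less_trans)
  define k where "k \<rho> = eym_kappa (r \<rho>) (W \<rho>) (V \<rho>) (N \<rho>)" for \<rho>
  have k_lim: "(k \<longlongrightarrow> 1) at_bot" and N_lim: "(N \<longlongrightarrow> 1) at_bot"
    using regular_origin_limits[OF reg_r reg_W reg_V reg_N] by (simp_all add: k_def[abs_def])
  have dk: "(k has_real_derivative 1 - (k \<rho>)\<^sup>2 + 2 * (V \<rho>)\<^sup>2 / (r \<rho>)\<^sup>2) (at \<rho>)" if "\<rho> \<le> \<rho>0" for \<rho>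
    unfolding k_def[abs_def] k_def
    using inside[OF that] pos by (intro eym_kappa_has_real_derivative dr dW dV dN) auto
  have dkN: "((\<lambda>\<rho>. k \<rho> + N \<rho>) has_real_derivative 1 - (k \<rho>)\<^sup>2 + k \<rho> * N \<rho> - (N \<rho>)\<^sup>2) (at \<rho>)"
    if "\<rho> \<le> \<rho>0" for \<rho>
    using DERIV_add[OF dk dN[OF inside]] that by (simp add: k_def algebra_simps power2_eq_square)
  have "1 \<le> k \<rho>0"
  proof (rule barrier_from_at_bot[OF dk k_lim, where a = 0])
    show "0 < 1 - (k \<rho>)\<^sup>2 + 2 * (V \<rho>)\<^sup>2 / (r \<rho>)\<^sup>2" if "0 < k \<rho>" "k \<rho> < 1" for \<rho>
      using that power_strict_mono[of "k \<rho>" 1 2] by (simp add: add_pos_nonneg)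
  qed auto
  moreover have "- 2 \<le> - (k \<rho>0 + N \<rho>0)"
  proof (rule barrier_from_at_bot[where f = "\<lambda>\<rho>. - (k \<rho> + N \<rho>)" and L = "- 2" and a = "- 3"])
    show "((\<lambda>\<rho>. - (k \<rho> + N \<rho>)) has_real_derivative (k \<rho>)\<^sup>2 - k \<rho> * N \<rho> + (N \<rho>)\<^sup>2 - 1) (at \<rho>)"
      if "\<rho> \<le> \<rho>0" for \<rho>
      using DERIV_minus[OF dkN[OF that]] by (simp add: algebra_simps)
    show "((\<lambda>\<rho>. - (k \<rho> + N \<rho>)) \<longlongrightarrow> - 2) at_bot"
      using tendsto_minus[OF tendsto_add[OF k_lim N_lim]] by simp
    show "0 < (k \<rho>)\<^sup>2 - k \<rho> * N \<rho> + (N \<rho>)\<^sup>2 - 1" if "- (k \<rho> + N \<rho>) < - 2" for \<rho>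
      using quadratic_form_gt_1_of_sum_gt_2[of "k \<rho>" "N \<rho>"] that by simp
  qed simp_all
  ultimately show "1 \<le> k \<rho>0 \<and> k \<rho>0 \<le> 2 - N \<rho>0"
    unfolding k_def by simp
qed

end
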